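(* Let $n\ge 4$ be an even integer and let $k\ge 3$ and $m\ge 2$ be integers. Then the metric dimension of $(C_n\square P_k)\square P_m$ is $4$.
   Context: All graphs are finite and connected; $d(u,v)$ is the shortest-path distance. $C_n$ is the cycle on $n$ vertices and $P_k$ the path on $k$ vertices. The cartesian product $G\square H$ has vertex set $V(G)\times V(H)$, with $(g_1,h_1)$ adjacent to $(g_2,h_2)$ iff either $h_1=h_2$ and $g_1g_2\in E(G)$, or $g_1=g_2$ and $h_1h_2\in E(H)$. For an ordered set $Q=\{q_1,\dots,q_l\}$ of vertices, $r(x|Q)=(d(x,q_1),\dots,d(x,q_l))$. $Q$ is a resolving set of $G$ if any two distinct vertices of $G$ have distinct vectors $r(\cdot|Q)$; the metric dimension is the minimum size of a resolving set. *)

theory Defs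
  imports Main
begin

record 'a graph =
  verts :: "'a set"
  adj :: "'a \<Rightarrow> 'a \<Rightarrow> bool"

definition cycle_graph :: "nat \<Rightarrow> nat graph" where
  "cycle_graph n = \<lparr> verts = {0..<n},
     adj = (\<lambda>i j. i < n \<and> j < n \<and> i \<noteq> j \<and> ((i + 1) mod n = j \<or> (j + 1) mod n = i)) \<rparr>"

definition path_graph :: "nat \<Rightarrow> nat graph" where
  "path_graph k = \<lparr> verts = {0..<k},
     adj = (\<lambda>i j. i < k \<and> j < k \<and> (i + 1 = j \<or> j + 1 = i)) \<rparr>"

definition cart_prod :: "'a graph \<Rightarrow> 'b graph \<Rightarrow> ('a \<times> 'b) graph" where
  "cart_prod G H = \<lparr> verts = verts G \<times> verts H,
     adj = (\<lambda>(g1, h1) (g2, h2). (h1 = h2 \<and> adj G g1 g2) \<or> (g1 = g2 \<and> adj H h1 h2)) \<rparr>"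

text \<open>Walks as nonempty vertex lists; length of the walk = length xs - 1.\<close>
definition walk :: "'a graph \<Rightarrow> 'a list \<Rightarrow> bool" where
  "walk G xs \<longleftrightarrow> xs \<noteq> [] \<and> set xs \<subseteq> verts G \<and>
     (\<forall>i. Suc i < length xs \<longrightarrow> adj G (xs ! i) (xs ! Suc i))"

text \<open>Shortest-path distance (graphs considered are connected).\<close>
definition dist :: "'a graph \<Rightarrow> 'a \<Rightarrow> 'a \<Rightarrow> nat" where
  "dist G u v = (LEAST n. \<exists>xs. walk G xs \<and> hd xs = u \<and> last xs = v \<and> length xs = Suc n)"

definition resolving_set :: "'a graph \<Rightarrow> 'a set \<Rightarrow> bool" where
  "resolving_set G Q \<longleftrightarrow> Q \<subseteq> verts G \<and>
     (\<forall>x\<in>verts G. \<forall>y\<in>verts G. (\<forall>q\<in>Q. dist G x q = dist G y q) \<longrightarrow> x = y)"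

definition metric_dim :: "'a graph \<Rightarrow> nat" where
  "metric_dim G = (LEAST l. \<exists>Q. finite Q \<and> card Q = l \<and> resolving_set G Q)"

end

theory Submission
  imports Defs
begin

text \<open>
  Distances in \<open>C\<^sub>n \<box> P\<^sub>k \<box> P\<^sub>m\<close> are sums of the distances of the three
  coordinates, and as \<open>n\<close> is even the graph is bipartite: along an edge the distance to any
  fixed vertex changes by exactly one. So the neighbours of a vertex \<open>s\<close> lie at distance 1
  from \<open>s\<close> and at distance \<open>d(s,x) \<plusminus> 1\<close> from any \<open>x\<close>; for a set \<open>{s,t,w}\<close> at most
  four of them can have distinct distance vectors. A vertex off the corners of the grid
  \<open>P\<^sub>k \<box> P\<^sub>m\<close> has at least five neighbours, so the vertices of a resolving set of size three
  are grid corners.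

  At a corner \<open>s = (p,u,v)\<close>, let \<open>b, b'\<close> be the cycle neighbours of \<open>p\<close> and \<open>u\<^sub>i, v\<^sub>i\<close> the
  inner path neighbours of \<open>u, v\<close>. Resolvability forces exactly two of the four neighbours of
  \<open>s\<close> to be farther from \<open>t\<close>; by additivity this makes \<open>(b,u,v\<^sub>i)\<close> and \<open>(b',u\<^sub>i,v)\<close>
  equidistant from \<open>t\<close> for one of the two orders of \<open>b, b'\<close>, and for both orders unless
  the grid corner of \<open>t\<close> is adjacent to that of \<open>s\<close>. Among three grid corners one of them
  has at most one adjacent partner; taking it as \<open>s\<close> gives a pair that is not resolved.

  Conversely \<open>(0,0,0)\<close>, \<open>(0,0,m-1)\<close> and \<open>(0,k-1,0)\<close> determine both path coordinates and the
  cycle distance to \<open>0\<close>, and \<open>(1,0,0)\<close> separates the two cycle positions at that distance.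
\<close>

lemma walk_Cons:
  assumes "ys \<noteq> []"
  shows "walk G (x # ys) \<longleftrightarrow> x \<in> verts G \<and> adj G x (hd ys) \<and> walk G ys"
proof -
  obtain l where "length ys = Suc l" using assms by (cases ys) auto
  then have "(\<forall>i. Suc i < length (x # ys) \<longrightarrow> adj G ((x # ys) ! i) ((x # ys) ! Suc i)) \<longleftrightarrow>
        adj G x (hd ys) \<and> (\<forall>i. Suc i < length ys \<longrightarrow> adj G (ys ! i) (ys ! Suc i))"
    using assms by (simp add: hd_conv_nth All_less_Suc2)
  then show ?thesis using assms unfolding walk_def by auto
qed

lemma walk_length_ge:
  assumes "walk G xs"
    and "\<And>x y. x \<in> verts G \<Longrightarrow> y \<in> verts G \<Longrightarrow> adj G x y \<Longrightarrow> f x \<le> f y + (1::nat)"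
  shows "f (hd xs) \<le> length xs - 1 + f (last xs)"
  using assms(1)
proof (induction xs)
  case Nil
  then show ?case by (simp add: walk_def)
next
  case (Cons x ys)
  show ?case
  proof (cases "ys = []")
    case True
    then show ?thesis by simp
  next
    case False
    with Cons.prems have "x \<in> verts G" "adj G x (hd ys)" "walk G ys"
      by (simp_all add: walk_Cons)
    moreover from \<open>walk G ys\<close> False have "hd ys \<in> verts G"
      unfolding walk_def by auto
    ultimately have "f x \<le> f (hd ys) + 1" using assms(2) by blast
    with Cons.IH \<open>walk G ys\<close> False show ?thesis by (cases ys) auto
  qed
qed

lemma walk_descending:
  assumes "u \<in> verts G" "v \<in> verts G"
    and descent: "\<And>x. x \<in> verts G \<Longrightarrow> 0 < f x \<Longrightarrow> \<exists>y\<in>verts G. adj G x y \<and> f y + 1 = f x"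
    and zero: "\<And>x. x \<in> verts G \<Longrightarrow> f x = 0 \<longleftrightarrow> x = v"
  shows "\<exists>xs. walk G xs \<and> hd xs = u \<and> last xs = v \<and> length xs = Suc (f u)"
  using assms(1)
proof (induction "f u" arbitrary: u)
  case 0
  then have "u = v" using zero by simp
  then show ?case using \<open>u \<in> verts G\<close> zero[OF assms(2)] by (intro exI[of _ "[u]"]) (simp add: walk_def)
next
  case (Suc N)
  then obtain y where y: "y \<in> verts G" "adj G u y" "f y = N" using descent by fastforce
  with Suc.hyps obtain ys where ys: "walk G ys" "hd ys = y" "last ys = v" "length ys = Suc N"
    by metis
  then have "ys \<noteq> []" by auto
  with y ys Suc.prems have "walk G (u # ys)" by (simp add: walk_Cons)
  with ys \<open>ys \<noteq> []\<close> Suc.hyps(2) show ?case by (intro exI[of _ "u # ys"]) auto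
qed

lemma dist_eq_potential:
  assumes "u \<in> verts G" "v \<in> verts G"
    and lipschitz: "\<And>x y. x \<in> verts G \<Longrightarrow> y \<in> verts G \<Longrightarrow> adj G x y \<Longrightarrow> f x \<le> f y + (1::nat)"
    and descent: "\<And>x. x \<in> verts G \<Longrightarrow> 0 < f x \<Longrightarrow> \<exists>y\<in>verts G. adj G x y \<and> f y + 1 = f x"
    and zero: "\<And>x. x \<in> verts G \<Longrightarrow> f x = 0 \<longleftrightarrow> x = v"
  shows "dist G u v = f u"
  unfolding dist_def
proof (rule Least_equality)
  show "\<exists>xs. walk G xs \<and> hd xs = u \<and> last xs = v \<and> length xs = Suc (f u)"
    using walk_descending[OF assms(1,2) descent zero] by blast
next
  fix N assume "\<exists>xs. walk G xs \<and> hd xs = u \<and> last xs = v \<and> length xs = Suc N"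
  then obtain xs where "walk G xs" "hd xs = u" "last xs = v" "length xs = Suc N" by blast
  with walk_length_ge[of G xs f] lipschitz zero[OF assms(2)] show "f u \<le> N" by simp
qed

definition resolves :: "'v set \<Rightarrow> ('v \<Rightarrow> 'v \<Rightarrow> nat) \<Rightarrow> 'v set \<Rightarrow> bool" where
  "resolves V d W \<longleftrightarrow> (\<forall>x\<in>V. \<forall>y\<in>V. (\<forall>w\<in>W. d x w = d y w) \<longrightarrow> x = y)"

lemma resolving_set_iff: "resolving_set G Q \<longleftrightarrow> Q \<subseteq> verts G \<and> resolves (verts G) (dist G) Q"
  by (simp add: resolving_set_def resolves_def)

lemma resolves_mono: "resolves V d W \<Longrightarrow> W \<subseteq> W' \<Longrightarrow> resolves V d W'"
  unfolding resolves_def by blast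

lemma resolves_cong:
  "(\<And>x w. x \<in> V \<Longrightarrow> w \<in> W \<Longrightarrow> d x w = d' x w) \<Longrightarrow> resolves V d W \<longleftrightarrow> resolves V d' W"
  unfolding resolves_def by auto

lemma metric_dim_eqI:
  assumes "finite Q" "resolving_set G Q"
    and "\<And>Q'. finite Q' \<Longrightarrow> resolving_set G Q' \<Longrightarrow> card Q \<le> card Q'"
  shows "metric_dim G = card Q"
  unfolding metric_dim_def by (rule Least_equality) (use assms in auto)

lemma subset_three_points:
  assumes "finite Q" "card Q \<le> 3" "Q \<subseteq> V" "x \<in> V"
  shows "\<exists>s1\<in>V. \<exists>s2\<in>V. \<exists>s3\<in>V. Q \<subseteq> {s1, s2, s3}"
proof -
  have "card Q = 0 \<or> card Q = 1 \<or> card Q = 2 \<or> card Q = 3" using assms(2) by arith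
  then show ?thesis
    using assms by (auto simp: card_1_singleton_iff card_2_iff card_3_iff)
qed

definition unit_step :: "'v set \<Rightarrow> ('v \<Rightarrow> 'v \<Rightarrow> nat) \<Rightarrow> 'v \<Rightarrow> 'v \<Rightarrow> bool" where
  "unit_step V d x y \<longleftrightarrow> (\<forall>w\<in>V. d y w = d x w + 1 \<or> d x w = d y w + 1)"

text \<open>All of \<open>N\<close> lies at distance 1 from \<open>s\<close> and at distance \<open>d s w \<plusminus> 1\<close> from \<open>w\<close>.\<close>

lemma card_unit_steps_le:
  assumes res: "resolves V d {s, t, w}" and "s \<in> V" "w \<in> V" "d s s = 0"
    and N: "finite N" "N \<subseteq> V" "\<And>y. y \<in> N \<Longrightarrow> unit_step V d s y"
  shows "card N \<le> 2 * card ((\<lambda>y. d y t) ` N)"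
proof -
  define g where "g y = (d y t, d y w)" for y
  have s_dist: "d y s = 1" if "y \<in> N" for y
    using N(3)[OF that] \<open>s \<in> V\<close> \<open>d s s = 0\<close> unfolding unit_step_def by fastforce
  have "inj_on g N"
  proof (rule inj_onI)
    fix x y assume "x \<in> N" "y \<in> N" "g x = g y"
    with s_dist have "\<forall>z\<in>{s, t, w}. d x z = d y z" by (simp add: g_def)
    with res \<open>x \<in> N\<close> \<open>y \<in> N\<close> N(2) show "x = y" unfolding resolves_def by blast
  qed
  then have "card N = card (g ` N)" by (simp add: card_image)
  also have "\<dots> \<le> card ((\<lambda>y. d y t) ` N \<times> {d s w + 1, d s w - 1})"
  proof (rule card_mono)
    show "finite ((\<lambda>y. d y t) ` N \<times> {d s w + 1, d s w - 1})" using N(1) by simp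
    show "g ` N \<subseteq> (\<lambda>y. d y t) ` N \<times> {d s w + 1, d s w - 1}"
      using N(3) \<open>w \<in> V\<close> unfolding g_def unit_step_def by force
  qed
  also have "\<dots> \<le> card ((\<lambda>y. d y t) ` N) * 2"
    by (simp add: card_cartesian_product card_insert_if)
  finally show ?thesis by simp
qed

lemma card_unit_steps_le_4:
  assumes "resolves V d {s, t, w}" "s \<in> V" "t \<in> V" "w \<in> V" "d s s = 0"
    and "finite N" "N \<subseteq> V" "\<And>y. y \<in> N \<Longrightarrow> unit_step V d s y"
  shows "card N \<le> 4"
proof -
  have "(\<lambda>y. d y t) ` N \<subseteq> {d s t + 1, d s t - 1}"
  proof (rule image_subsetI)
    fix y assume "y \<in> N"
    with assms(3,8) have "d y t = d s t + 1 \<or> d s t = d y t + 1" unfolding unit_step_def by blast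
    then show "d y t \<in> {d s t + 1, d s t - 1}" by auto
  qed
  then have "card ((\<lambda>y. d y t) ` N) \<le> card {d s t + 1, d s t - 1}"
    by (rule card_mono[rotated]) simp
  also have "\<dots> \<le> 2" by (simp add: card_insert_if)
  finally show ?thesis using card_unit_steps_le[OF assms(1,2,4,5,6,7,8)] by linarith
qed

lemma no_three_unit_steps_equidistant:
  assumes "resolves V d {s, t, w}" "s \<in> V" "w \<in> V" "d s s = 0"
    and "set [y1, y2, y3] \<subseteq> V" "distinct [y1, y2, y3]" "\<forall>y\<in>set [y1, y2, y3]. unit_step V d s y"
  shows "\<not> (d y1 t = d y2 t \<and> d y1 t = d y3 t)"
proof
  assume eq: "d y1 t = d y2 t \<and> d y1 t = d y3 t"
  have "card {y1, y2, y3} \<le> 2 * card ((\<lambda>y. d y t) ` {y1, y2, y3})"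
    using assms(5,7) by (intro card_unit_steps_le[OF assms(1-4)]) auto
  moreover from eq have "(\<lambda>y. d y t) ` {y1, y2, y3} = {d y1 t}" by auto
  ultimately show False using assms(6) by simp
qed

text \<open>At most two of the \<open>y\<^sub>i\<close> move away from \<open>t\<close> and at most two towards it, so if
  \<open>y\<^sub>1, y\<^sub>4\<close> move in opposite directions, so do \<open>y\<^sub>2, y\<^sub>3\<close>.\<close>

lemma unit_steps_pairing:
  assumes res: "resolves V d {s, t, w}" "s \<in> V" "w \<in> V" "d s s = 0" "t \<in> V"
    and ys: "set [y1, y2, y3, y4] \<subseteq> V" "distinct [y1, y2, y3, y4]"
      "\<forall>y\<in>set [y1, y2, y3, y4]. unit_step V d s y"
    and X: "d x t + d s t = d y1 t + d y4 t" and Y: "d y t + d s t = d y2 t + d y3 t"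
    and "d y1 t \<noteq> d y4 t"
  shows "d x t = d y t"
proof -
  let ?R = "d s t"
  have two_valued: "d z t = ?R + 1 \<or> ?R = d z t + 1" if "z \<in> set [y1, y2, y3, y4]" for z
    using ys(3) that \<open>t \<in> V\<close> unfolding unit_step_def by blast
  note no3 = no_three_unit_steps_equidistant[OF res(1-4)]
  have "d y1 t + d y4 t = 2 * ?R"
    using two_valued[of y1] two_valued[of y4] \<open>d y1 t \<noteq> d y4 t\<close> by auto
  moreover have "d y2 t \<noteq> d y3 t"
  proof
    assume "d y2 t = d y3 t"
    moreover have "d y2 t = d y1 t \<or> d y2 t = d y4 t"
      using two_valued[of y1] two_valued[of y2] two_valued[of y4] \<open>d y1 t \<noteq> d y4 t\<close> by auto
    ultimately show False
      using no3[of y1 y2 y3] no3[of y2 y3 y4] ys by auto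
  qed
  then have "d y2 t + d y3 t = 2 * ?R"
    using two_valued[of y2] two_valued[of y3] by auto
  ultimately show ?thesis using X Y by linarith
qed

definition absdiff :: "nat \<Rightarrow> nat \<Rightarrow> nat" where
  "absdiff a b = (a - b) + (b - a)"

lemma absdiff_self [simp]: "absdiff a a = 0"
  by (simp add: absdiff_def)

lemma absdiff_adjacent:
  "b + 1 = b' \<or> b' + 1 = b \<Longrightarrow> absdiff b' u = absdiff b u + 1 \<or> absdiff b u = absdiff b' u + 1"
  unfolding absdiff_def by arith

definition cyc_dist :: "nat \<Rightarrow> nat \<Rightarrow> nat \<Rightarrow> nat" where
  "cyc_dist n a b = min (absdiff a b) (n - absdiff a b)"

lemma adj_cycle_graph:
  "adj (cycle_graph n) a b \<longleftrightarrow> a < n \<and> b < n \<and> a \<noteq> b \<and> ((a + 1) mod n = b \<or> (b + 1) mod n = a)"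
  by (simp add: cycle_graph_def)

lemma cyc_dist_self [simp]: "cyc_dist n a a = 0"
  by (simp add: cyc_dist_def)

lemma cyc_dist_eq_0_iff: "a < n \<Longrightarrow> b < n \<Longrightarrow> cyc_dist n a b = 0 \<longleftrightarrow> a = b"
  by (auto simp: cyc_dist_def absdiff_def min_def)

lemma min_compl_Suc:
  fixes n d :: nat
  assumes "even n" "d < n"
  shows "min (d + 1) (n - (d + 1)) = min d (n - d) + 1 \<or> min d (n - d) = min (d + 1) (n - (d + 1)) + 1"
proof -
  from assms(1) obtain h where "n = 2 * h" by (elim evenE)
  show ?thesis
  proof (cases "d < h")
    case True
    then have "min d (n - d) = d" "min (d + 1) (n - (d + 1)) = d + 1" using \<open>n = 2 * h\<close> by auto
    then show ?thesis by simp
  next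
    case False
    then have "min d (n - d) = n - d" "min (d + 1) (n - (d + 1)) + 1 = n - d"
      using \<open>n = 2 * h\<close> assms(2) by auto
    then show ?thesis by simp
  qed
qed

lemma cyc_dist_succ:
  assumes "even n" "a < n" "p < n"
  shows "cyc_dist n ((a + 1) mod n) p = cyc_dist n a p + 1 \<or> cyc_dist n a p = cyc_dist n ((a + 1) mod n) p + 1"
proof (cases "a + 1 = n")
  case True
  then have "cyc_dist n ((a + 1) mod n) p = min p (n - p)"
    "cyc_dist n a p = min (p + 1) (n - (p + 1))"
    using assms(3) by (auto simp: cyc_dist_def absdiff_def min_def)
  then show ?thesis using min_compl_Suc[OF assms(1,3)] by auto
next
  case False
  then have "(a + 1) mod n = a + 1" "a + 1 < n" using assms(2) by simp_all
  moreover have "absdiff (a + 1) p = absdiff a p + 1 \<or> absdiff a p = absdiff (a + 1) p + 1"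
    by (rule absdiff_adjacent) simp
  moreover have "absdiff a p < n" "absdiff (a + 1) p < n"
    using assms(2,3) \<open>a + 1 < n\<close> unfolding absdiff_def by arith+
  ultimately show ?thesis
    unfolding cyc_dist_def using min_compl_Suc[OF assms(1)] by metis
qed

lemma cyc_dist_adj:
  assumes "even n" "adj (cycle_graph n) a b" "p < n"
  shows "cyc_dist n b p = cyc_dist n a p + 1 \<or> cyc_dist n a p = cyc_dist n b p + 1"
  using assms cyc_dist_succ[OF assms(1) _ assms(3)] unfolding adj_cycle_graph by metis

lemma cyc_dist_adj_self: "even n \<Longrightarrow> adj (cycle_graph n) p b \<Longrightarrow> cyc_dist n b p = 1"
  using cyc_dist_adj[of n p b p] by (simp add: adj_cycle_graph)

lemma cyc_dist_descent:
  assumes "a < n" "p < n" "a \<noteq> p"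
  shows "\<exists>b. adj (cycle_graph n) a b \<and> cyc_dist n b p + 1 = cyc_dist n a p"
proof (cases "absdiff a p \<le> n - absdiff a p")
  case True
  define b where "b = (if a < p then a + 1 else a - 1)"
  have "absdiff b p + 1 = absdiff a p" "absdiff a p \<le> n"
    using assms unfolding absdiff_def b_def by auto
  with True have "cyc_dist n b p + 1 = cyc_dist n a p"
    unfolding cyc_dist_def by linarith
  moreover have "adj (cycle_graph n) a b" unfolding adj_cycle_graph b_def using assms by auto
  ultimately show ?thesis by blast
next
  case False
  define b where
    "b = (if a < p then (if a = 0 then n - 1 else a - 1) else (if a + 1 = n then 0 else a + 1))"
  have "absdiff b p + 1 = n - absdiff a p \<or> absdiff b p = absdiff a p + 1" "absdiff a p < n"
    using assms unfolding absdiff_def b_def by auto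
  then have "cyc_dist n b p + 1 = n - absdiff a p"
    using False unfolding cyc_dist_def by (auto simp: min_def)
  with False have "cyc_dist n b p + 1 = cyc_dist n a p"
    unfolding cyc_dist_def by linarith
  moreover have "adj (cycle_graph n) a b" unfolding adj_cycle_graph b_def using assms by auto
  ultimately show ?thesis by blast
qed

lemma cycle_two_adj:
  assumes "3 \<le> n" "a < n"
  obtains b1 b2 where "b1 \<noteq> b2" "adj (cycle_graph n) a b1" "adj (cycle_graph n) a b2"
proof
  show "adj (cycle_graph n) a (if a + 1 = n then 0 else a + 1)"
    using assms unfolding adj_cycle_graph by auto
  show "adj (cycle_graph n) a (if a = 0 then n - 1 else a - 1)"
    using assms unfolding adj_cycle_graph by auto
  show "(if a + 1 = n then 0 else a + 1) \<noteq> (if a = 0 then n - 1 else a - 1)"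
    using assms by auto
qed

lemma cyc_dist_0_1_inj:
  assumes "a < n" "b < n" "cyc_dist n a 0 = cyc_dist n b 0" "cyc_dist n a 1 = cyc_dist n b 1"
  shows "a = b"
proof (rule ccontr)
  assume "a \<noteq> b"
  have "min a (n - a) = min b (n - b)" using assms(3) by (simp add: cyc_dist_def absdiff_def)
  with \<open>a \<noteq> b\<close> assms(1,2) have "b = n - a" "0 < a" "a \<noteq> n - a"
    by (auto simp: min_def split: if_splits)
  moreover have "min (a - 1) (n - (a - 1)) = min (b - 1) (n - (b - 1))"
    using assms(4) \<open>0 < a\<close> \<open>b = n - a\<close> assms(1) by (simp add: cyc_dist_def absdiff_def)
  ultimately show False using assms(1) by (simp add: min_def split: if_splits)
qed

lemma adj_path_graph: "adj (path_graph k) a b \<longleftrightarrow> a < k \<and> b < k \<and> (a + 1 = b \<or> b + 1 = a)"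
  by (simp add: path_graph_def)

lemma path_descent:
  assumes "b < k" "u < k" "b \<noteq> u"
  shows "\<exists>b'. adj (path_graph k) b b' \<and> absdiff b' u + 1 = absdiff b u"
proof
  let ?b' = "if b < u then b + 1 else b - 1"
  show "adj (path_graph k) b ?b' \<and> absdiff ?b' u + 1 = absdiff b u"
    using assms unfolding adj_path_graph absdiff_def by auto
qed

definition path_end :: "nat \<Rightarrow> nat \<Rightarrow> bool" where
  "path_end k b \<longleftrightarrow> b = 0 \<or> b = k - 1"

definition path_inward :: "nat \<Rightarrow> nat" where
  "path_inward b = (if b = 0 then 1 else b - 1)"

lemma adj_path_inward: "2 \<le> k \<Longrightarrow> b < k \<Longrightarrow> adj (path_graph k) b (path_inward b)"
  by (auto simp: adj_path_graph path_inward_def)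

lemma absdiff_path_inward_self [simp]: "absdiff (path_inward b) b = 1"
  by (simp add: absdiff_def path_inward_def)

lemma absdiff_path_inward_opposite:
  "2 \<le> k \<Longrightarrow> path_end k b \<Longrightarrow> path_end k u \<Longrightarrow> u \<noteq> b \<Longrightarrow> absdiff (path_inward b) u + 1 = absdiff b u"
  by (auto simp: absdiff_def path_inward_def path_end_def)

lemma path_end_two_valued:
  "path_end k a \<Longrightarrow> path_end k b \<Longrightarrow> path_end k c \<Longrightarrow> a = b \<or> a = c \<or> b = c"
  by (auto simp: path_end_def)

abbreviation prism :: "nat \<Rightarrow> nat \<Rightarrow> nat \<Rightarrow> ((nat \<times> nat) \<times> nat) graph" where
  "prism n k m \<equiv> cart_prod (cart_prod (cycle_graph n) (path_graph k)) (path_graph m)"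

fun prism_dist :: "nat \<Rightarrow> (nat \<times> nat) \<times> nat \<Rightarrow> (nat \<times> nat) \<times> nat \<Rightarrow> nat" where
  "prism_dist n ((a, b), c) ((p, u), v) = cyc_dist n a p + absdiff b u + absdiff c v"

lemma mem_verts_prism [simp]: "((a, b), c) \<in> verts (prism n k m) \<longleftrightarrow> a < n \<and> b < k \<and> c < m"
  by (simp add: cart_prod_def cycle_graph_def path_graph_def)

lemma adj_prism:
  "adj (prism n k m) ((a, b), c) ((a', b'), c') \<longleftrightarrow>
     (b = b' \<and> c = c' \<and> adj (cycle_graph n) a a') \<or>
     (a = a' \<and> c = c' \<and> adj (path_graph k) b b') \<or>
     (a = a' \<and> b = b' \<and> adj (path_graph m) c c')"
  by (auto simp: cart_prod_def)

lemma adj_prism_verts: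
  assumes "adj (prism n k m) x y" "x \<in> verts (prism n k m)"
  shows "y \<in> verts (prism n k m)"
proof -
  obtain a b c a' b' c' where "x = ((a, b), c)" "y = ((a', b'), c')" by (metis prod.collapse)
  with assms show ?thesis by (auto simp: adj_prism adj_cycle_graph adj_path_graph)
qed

lemma prism_dist_adj:
  assumes "even n" "adj (prism n k m) x y" "w \<in> verts (prism n k m)"
  shows "prism_dist n y w = prism_dist n x w + 1 \<or> prism_dist n x w = prism_dist n y w + 1"
proof -
  obtain a b c a' b' c' p u v where xyw: "x = ((a, b), c)" "y = ((a', b'), c')" "w = ((p, u), v)"
    by (metis prod.collapse)
  from assms(2) consider
      "b = b'" "c = c'" "adj (cycle_graph n) a a'"
    | "a = a'" "c = c'" "adj (path_graph k) b b'"
    | "a = a'" "b = b'" "adj (path_graph m) c c'"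
    unfolding xyw adj_prism by blast
  then show ?thesis
  proof cases
    case 1
    with cyc_dist_adj[OF assms(1) 1(3), of p] assms(3) show ?thesis by (auto simp: xyw)
  next
    case 2
    with absdiff_adjacent[of b b' u] show ?thesis by (auto simp: xyw adj_path_graph)
  next
    case 3
    with absdiff_adjacent[of c c' v] show ?thesis by (auto simp: xyw adj_path_graph)
  qed
qed

lemma prism_dist_eq_0_iff:
  "x \<in> verts (prism n k m) \<Longrightarrow> y \<in> verts (prism n k m) \<Longrightarrow> prism_dist n x y = 0 \<longleftrightarrow> x = y"
  by (cases x; cases y) (auto simp: cyc_dist_eq_0_iff absdiff_def)

lemma prism_dist_descent:
  assumes "x \<in> verts (prism n k m)" "q \<in> verts (prism n k m)" "x \<noteq> q"
  shows "\<exists>y\<in>verts (prism n k m). adj (prism n k m) x y \<and> prism_dist n y q + 1 = prism_dist n x q"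
proof -
  obtain a b c p u v where xq: "x = ((a, b), c)" "q = ((p, u), v)" by (metis prod.collapse)
  consider "a \<noteq> p" | "a = p" "b \<noteq> u" | "a = p" "b = u" "c \<noteq> v" using assms(3) xq by blast
  then show ?thesis
  proof cases
    case 1
    with cyc_dist_descent[of a n p] assms xq obtain a' where
      "adj (cycle_graph n) a a'" "cyc_dist n a' p + 1 = cyc_dist n a p" by auto
    with assms xq show ?thesis
      by (intro bexI[of _ "((a', b), c)"]) (auto simp: adj_prism adj_cycle_graph)
  next
    case 2
    with path_descent[of b k u] assms xq obtain b' where
      "adj (path_graph k) b b'" "absdiff b' u + 1 = absdiff b u" by auto
    with assms xq 2 show ?thesis
      by (intro bexI[of _ "((a, b'), c)"]) (auto simp: adj_prism adj_path_graph)
  next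
    case 3
    with path_descent[of c m v] assms xq obtain c' where
      "adj (path_graph m) c c'" "absdiff c' v + 1 = absdiff c v" by auto
    with assms xq 3 show ?thesis
      by (intro bexI[of _ "((a, b), c')"]) (auto simp: adj_prism adj_path_graph)
  qed
qed

lemma dist_prism:
  assumes "even n" "x \<in> verts (prism n k m)" "q \<in> verts (prism n k m)"
  shows "dist (prism n k m) x q = prism_dist n x q"
proof (rule dist_eq_potential[OF assms(2,3)])
  fix y z assume "y \<in> verts (prism n k m)" "z \<in> verts (prism n k m)" "adj (prism n k m) y z"
  with prism_dist_adj[OF assms(1) this(3) assms(3)] show "prism_dist n y q \<le> prism_dist n z q + 1"
    by linarith
next
  fix y assume "y \<in> verts (prism n k m)" "0 < prism_dist n y q"
  with prism_dist_descent[OF this(1) assms(3)] prism_dist_eq_0_iff[OF this(1) assms(3)]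
  show "\<exists>z\<in>verts (prism n k m). adj (prism n k m) y z \<and> prism_dist n z q + 1 = prism_dist n y q"
    by auto
next
  fix y assume "y \<in> verts (prism n k m)"
  from prism_dist_eq_0_iff[OF this assms(3)] show "prism_dist n y q = 0 \<longleftrightarrow> y = q" .
qed

text \<open>The argument needs only \<open>k \<ge> 2\<close>, not the \<open>k \<ge> 3\<close> of the theorem.\<close>

locale even_prism =
  fixes n k m :: nat
  assumes even_n: "even n" and n_ge_4: "4 \<le> n" and k_ge_2: "2 \<le> k" and m_ge_2: "2 \<le> m"
begin

abbreviation V :: "((nat \<times> nat) \<times> nat) set" where
  "V \<equiv> verts (prism n k m)"

abbreviation d :: "(nat \<times> nat) \<times> nat \<Rightarrow> (nat \<times> nat) \<times> nat \<Rightarrow> nat" where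
  "d \<equiv> prism_dist n"

lemma resolving_set_prism_iff: "resolving_set (prism n k m) Q \<longleftrightarrow> Q \<subseteq> V \<and> resolves V d Q"
proof -
  have "resolves V (dist (prism n k m)) Q \<longleftrightarrow> resolves V d Q" if "Q \<subseteq> V"
    using that by (intro resolves_cong) (auto simp: dist_prism[OF even_n])
  then show ?thesis by (auto simp: resolving_set_iff)
qed

lemma unit_step_adj: "adj (prism n k m) x y \<Longrightarrow> unit_step V d x y"
  using prism_dist_adj[OF even_n] unfolding unit_step_def by blast

lemma non_corner_not_resolves:
  assumes "s = ((p, u), v)" "s \<in> V" "\<not> (path_end k u \<and> path_end m v)" "t \<in> V" "w \<in> V"
  shows "\<not> resolves V d {s, t, w}"
proof
  assume res: "resolves V d {s, t, w}"
  have "3 \<le> n" using n_ge_4 by simp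
  with assms(1,2) obtain b1 b2 where b: "b1 \<noteq> b2" "adj (cycle_graph n) p b1" "adj (cycle_graph n) p b2"
    by (auto elim: cycle_two_adj)
  have "\<exists>N. finite N \<and> N \<subseteq> V \<and> card N = 5 \<and> (\<forall>y\<in>N. adj (prism n k m) s y)"
  proof (cases "path_end k u")
    case False
    with assms(1,2) have "0 < u" "u + 1 < k" unfolding path_end_def by auto
    let ?N = "{((b1, u), v), ((b2, u), v), ((p, u - 1), v), ((p, u + 1), v), ((p, u), path_inward v)}"
    have "path_inward v \<noteq> v" by (auto simp: path_inward_def)
    with b \<open>0 < u\<close> \<open>u + 1 < k\<close> assms(1,2) adj_path_inward[OF m_ge_2, of v] show ?thesis
      by (intro exI[of _ ?N]) (auto simp: adj_prism adj_path_graph adj_cycle_graph)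
  next
    case True
    with assms(1-3) have "0 < v" "v + 1 < m" unfolding path_end_def by auto
    let ?N = "{((b1, u), v), ((b2, u), v), ((p, u), v - 1), ((p, u), v + 1), ((p, path_inward u), v)}"
    have "path_inward u \<noteq> u" by (auto simp: path_inward_def)
    with b \<open>0 < v\<close> \<open>v + 1 < m\<close> assms(1,2) adj_path_inward[OF k_ge_2, of u] show ?thesis
      by (intro exI[of _ ?N]) (auto simp: adj_prism adj_path_graph adj_cycle_graph)
  qed
  then obtain N where N: "finite N" "N \<subseteq> V" "card N = 5" "\<And>y. y \<in> N \<Longrightarrow> adj (prism n k m) s y"
    by blast
  have "d s s = 0" using prism_dist_eq_0_iff[OF assms(2,2)] by simp
  from card_unit_steps_le_4[OF res assms(2,4,5) this N(1,2) unit_step_adj[OF N(4)]] N(3)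
  show False by simp
qed

lemma four_nbrs_unit_steps:
  assumes "s = ((p, u), v)" "s \<in> V" "b1 \<noteq> b2" "adj (cycle_graph n) p b1" "adj (cycle_graph n) p b2"
  defines "ys \<equiv> [((b1, u), v), ((b2, u), v), ((p, path_inward u), v), ((p, u), path_inward v)]"
  shows "set ys \<subseteq> V" "distinct ys" "\<forall>y\<in>set ys. unit_step V d s y"
proof -
  have "path_inward u \<noteq> u" "path_inward v \<noteq> v" by (auto simp: path_inward_def)
  have adj: "\<forall>y\<in>set ys. adj (prism n k m) s y"
    using assms(1-5) adj_path_inward[OF k_ge_2, of u] adj_path_inward[OF m_ge_2, of v]
    by (auto simp: ys_def adj_prism)
  with assms(2) adj_prism_verts show "set ys \<subseteq> V" by blast
  from adj unit_step_adj show "\<forall>y\<in>set ys. unit_step V d s y" by blast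
  show "distinct ys"
    using assms(3-5) \<open>path_inward u \<noteq> u\<close> \<open>path_inward v \<noteq> v\<close> by (auto simp: ys_def adj_cycle_graph)
qed

lemma corner_pair_equidistant:
  assumes res: "resolves V d {s, t, w}" "w \<in> V"
    and s: "s = ((p, u), v)" "s \<in> V" "path_end k u" "path_end m v"
    and t: "t = ((q, u'), v')" "t \<in> V" "path_end k u'" "path_end m v'"
    and b: "b1 \<noteq> b2" "adj (cycle_graph n) p b1" "adj (cycle_graph n) p b2"
  shows "d ((b1, u), path_inward v) t = d ((b2, path_inward u), v) t \<or>
         d ((b2, u), path_inward v) t = d ((b1, path_inward u), v) t"
    and "(u' = u) = (v' = v) \<Longrightarrow> d ((b1, u), path_inward v) t = d ((b2, path_inward u), v) t"
proof -
  let ?N1 = "((b1, u), v)" and ?N2 = "((b2, u), v)"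
    and ?Nb = "((p, path_inward u), v)" and ?Nc = "((p, u), path_inward v)"
  note nbrs = four_nbrs_unit_steps[OF s(1,2) b]
  have "d s s = 0" using prism_dist_eq_0_iff[OF s(2,2)] by simp
  note no3 = no_three_unit_steps_equidistant[OF res(1) s(2) res(2) \<open>d s s = 0\<close>]
  note pairing = unit_steps_pairing[OF res(1) s(2) res(2) \<open>d s s = 0\<close> t(2)]
  have X: "d ((c, u), path_inward v) t + d s t = d ((c, u), v) t + d ?Nc t" for c
    by (simp add: s t)
  have Y: "d ((c, path_inward u), v) t + d s t = d ((c, u), v) t + d ?Nb t" for c
    by (simp add: s t)
  have eq12: "d ((b1, u), path_inward v) t = d ((b2, path_inward u), v) t" if "d ?N1 t \<noteq> d ?Nc t"
    using pairing[OF _ _ _ X[of b1] Y[of b2]] that nbrs by auto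
  have eq21: "d ((b2, u), path_inward v) t = d ((b1, path_inward u), v) t" if "d ?N2 t \<noteq> d ?Nc t"
    using pairing[OF _ _ _ X[of b2] Y[of b1]] that nbrs by auto
  have "\<not> (d ?N1 t = d ?N2 t \<and> d ?N1 t = d ?Nc t)"
    by (rule no3) (use nbrs in \<open>simp_all del: mem_verts_prism\<close>)
  then have "d ?N1 t \<noteq> d ?Nc t \<or> d ?N2 t \<noteq> d ?Nc t" by auto
  with eq12 eq21 show "d ((b1, u), path_inward v) t = d ((b2, path_inward u), v) t \<or>
      d ((b2, u), path_inward v) t = d ((b1, path_inward u), v) t"
    by blast
  assume "(u' = u) = (v' = v)"
  have "d ?Nb t = d ?Nc t"
  proof (cases "u' = u")
    case True
    with \<open>(u' = u) = (v' = v)\<close> show ?thesis by (simp add: s t)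
  next
    case False
    with \<open>(u' = u) = (v' = v)\<close> have "v' \<noteq> v" by simp
    with False absdiff_path_inward_opposite[OF k_ge_2 s(3) t(3)]
      absdiff_path_inward_opposite[OF m_ge_2 s(4) t(4)]
    show ?thesis unfolding s t prism_dist.simps by linarith
  qed
  moreover have "\<not> (d ?N1 t = d ?Nb t \<and> d ?N1 t = d ?Nc t)"
    by (rule no3) (use nbrs in \<open>simp_all del: mem_verts_prism\<close>)
  ultimately have "d ?N1 t \<noteq> d ?Nc t" by auto
  with eq12 show "d ((b1, u), path_inward v) t = d ((b2, path_inward u), v) t" .
qed

lemma equidistant_pair_not_resolves:
  assumes s: "s = ((p, u), v)" "s \<in> V"
    and c: "c1 \<noteq> c2" "adj (cycle_graph n) p c1" "adj (cycle_graph n) p c2"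
    and eq: "\<And>t. t \<in> {t2, t3} \<Longrightarrow>
      d ((c1, u), path_inward v) t = d ((c2, path_inward u), v) t"
  shows "\<not> resolves V d {s, t2, t3}"
proof -
  let ?X = "((c1, u), path_inward v)" and ?Y = "((c2, path_inward u), v)"
  have "?X \<in> V" "?Y \<in> V"
    using s c k_ge_2 m_ge_2 adj_path_inward[of k u] adj_path_inward[of m v]
    by (simp_all add: adj_cycle_graph adj_path_graph)
  moreover have "?X \<noteq> ?Y" by (simp add: path_inward_def)
  moreover have "d ?X s = d ?Y s"
    using cyc_dist_adj_self[OF even_n c(2)] cyc_dist_adj_self[OF even_n c(3)] by (simp add: s(1))
  ultimately show ?thesis using eq unfolding resolves_def by blast
qed

text \<open>The last hypothesis: at most one of \<open>t2, t3\<close> sits at a grid corner adjacent to that of \<open>s\<close>.\<close>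

lemma corner_triple_not_resolves:
  assumes s: "s = ((p, u), v)" "s \<in> V" "path_end k u" "path_end m v"
    and t2: "t2 = ((q2, u2), v2)" "t2 \<in> V" "path_end k u2" "path_end m v2"
    and t3: "t3 = ((q3, u3), v3)" "t3 \<in> V" "path_end k u3" "path_end m v3"
    and "(u2 = u) = (v2 = v) \<or> (u3 = u) = (v3 = v)"
  shows "\<not> resolves V d {s, t2, t3}"
proof
  assume res: "resolves V d {s, t2, t3}"
  then have res': "resolves V d {s, t3, t2}" by (simp add: insert_commute)
  have "3 \<le> n" using n_ge_4 by simp
  with s(1,2) obtain b1 b2 where b: "b1 \<noteq> b2" "adj (cycle_graph n) p b1" "adj (cycle_graph n) p b2"
    by (auto elim: cycle_two_adj)
  note P2 = corner_pair_equidistant[OF res t3(2) s t2 b]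
    corner_pair_equidistant(2)[OF res t3(2) s t2 b(1)[symmetric] b(3,2)]
  note P3 = corner_pair_equidistant[OF res' t2(2) s t3 b]
    corner_pair_equidistant(2)[OF res' t2(2) s t3 b(1)[symmetric] b(3,2)]
  consider
      "\<And>t. t \<in> {t2, t3} \<Longrightarrow> d ((b1, u), path_inward v) t = d ((b2, path_inward u), v) t"
    | "\<And>t. t \<in> {t2, t3} \<Longrightarrow> d ((b2, u), path_inward v) t = d ((b1, path_inward u), v) t"
    using P2 P3 assms(13) by auto
  then show False
  proof cases
    case 1
    from equidistant_pair_not_resolves[OF s(1,2) b 1] res show False by blast
  next
    case 2
    from equidistant_pair_not_resolves[OF s(1,2) b(1)[symmetric] b(3,2) 2] res show False by blast
  qed
qed

lemma three_points_not_resolve: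
  assumes "s1 \<in> V" "s2 \<in> V" "s3 \<in> V"
  shows "\<not> resolves V d {s1, s2, s3}"
proof -
  obtain p1 u1 v1 p2 u2 v2 p3 u3 v3 where
    s: "s1 = ((p1, u1), v1)" "s2 = ((p2, u2), v2)" "s3 = ((p3, u3), v3)"
    by (metis prod.collapse)
  have perm: "{s1, s2, s3} = {s2, s1, s3}" "{s1, s2, s3} = {s3, s1, s2}" by auto
  consider "\<not> (path_end k u1 \<and> path_end m v1)" | "\<not> (path_end k u2 \<and> path_end m v2)"
    | "\<not> (path_end k u3 \<and> path_end m v3)"
    | "path_end k u1" "path_end m v1" "path_end k u2" "path_end m v2" "path_end k u3" "path_end m v3"
    by blast
  then show ?thesis
  proof cases
    case 1
    from non_corner_not_resolves[OF s(1) assms(1) 1 assms(2,3)] show ?thesis .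
  next
    case 2
    from non_corner_not_resolves[OF s(2) assms(2) 2 assms(1,3)] show ?thesis by (simp add: perm(1))
  next
    case 3
    from non_corner_not_resolves[OF s(3) assms(3) 3 assms(1,2)] show ?thesis by (simp add: perm(2))
  next
    case 4
    show ?thesis
    proof (cases "(u2 = u1) = (v2 = v1) \<or> (u3 = u1) = (v3 = v1)")
      case True
      with corner_triple_not_resolves[OF s(1) assms(1) 4(1,2) s(2) assms(2) 4(3,4) s(3) assms(3) 4(5,6)]
      show ?thesis by blast
    next
      case False
      \<comment> \<open>three corners of a rectangle are never pairwise adjacent\<close>
      then have "(u3 = u2) = (v3 = v2)"
        using path_end_two_valued[OF 4(1,3,5)] path_end_two_valued[OF 4(2,4,6)] by blast
      with corner_triple_not_resolves[OF s(2) assms(2) 4(3,4) s(1) assms(1) 4(1,2) s(3) assms(3) 4(5,6)]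
      show ?thesis using perm(1) by simp
    qed
  qed
qed

lemma resolving_set_card_ge_4:
  assumes "finite Q" "resolving_set (prism n k m) Q"
  shows "4 \<le> card Q"
proof (rule ccontr)
  assume "\<not> 4 \<le> card Q"
  then have "card Q \<le> 3" by simp
  from assms(2) have "Q \<subseteq> V" "resolves V d Q" unfolding resolving_set_prism_iff by simp_all
  have "((0, 0), 0) \<in> V" using n_ge_4 k_ge_2 m_ge_2 by simp
  with subset_three_points[OF assms(1) \<open>card Q \<le> 3\<close> \<open>Q \<subseteq> V\<close>]
  obtain s1 s2 s3 where "s1 \<in> V" "s2 \<in> V" "s3 \<in> V" "Q \<subseteq> {s1, s2, s3}"
    by blast
  with resolves_mono[OF \<open>resolves V d Q\<close>] three_points_not_resolve show False by blast
qed

definition landmarks :: "((nat \<times> nat) \<times> nat) set" where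
  "landmarks = {((0, 0), 0), ((0, 0), m - 1), ((0, k - 1), 0), ((1, 0), 0)}"

lemma card_landmarks: "card landmarks = 4"
  using k_ge_2 m_ge_2 by (simp add: landmarks_def card_insert_if)

lemma landmarks_resolving_set: "resolving_set (prism n k m) landmarks"
  unfolding resolving_set_prism_iff
proof (intro conjI)
  show "landmarks \<subseteq> V" using n_ge_4 k_ge_2 m_ge_2 by (auto simp: landmarks_def)
  show "resolves V d landmarks"
    unfolding resolves_def
  proof (intro ballI impI)
    fix x y assume "x \<in> V" "y \<in> V" and eq: "\<forall>w\<in>landmarks. d x w = d y w"
    obtain a b c a' b' c' where xy: "x = ((a, b), c)" "y = ((a', b'), c')" by (metis prod.collapse)
    with \<open>x \<in> V\<close> \<open>y \<in> V\<close> have bounds: "a < n" "b < k" "c < m" "a' < n" "b' < k" "c' < m"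
      by auto
    from eq have
      E1: "cyc_dist n a 0 + b + c = cyc_dist n a' 0 + b' + c'" and
      E2: "cyc_dist n a 0 + b + (m - 1 - c) = cyc_dist n a' 0 + b' + (m - 1 - c')" and
      E3: "cyc_dist n a 0 + (k - 1 - b) + c = cyc_dist n a' 0 + (k - 1 - b') + c'" and
      E4: "cyc_dist n a 1 + b + c = cyc_dist n a' 1 + b' + c'"
      using bounds by (auto simp: landmarks_def xy absdiff_def)
    from E1 E2 bounds have "c = c'" by arith
    moreover from E1 E3 bounds have "b = b'" by arith
    moreover from E1 E4 \<open>c = c'\<close> \<open>b = b'\<close> have "a = a'"
      using cyc_dist_0_1_inj[OF bounds(1,4)] by simp
    ultimately show "x = y" by (simp add: xy)
  qed
qed

end

theorem theorem3p4:
  fixes n k m :: nat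
  assumes "n \<ge> 4" and "even n" and "k \<ge> 3" and "m \<ge> 2"
  shows "metric_dim (cart_prod (cart_prod (cycle_graph n) (path_graph k)) (path_graph m)) = 4"
proof -
  interpret even_prism n k m using assms by unfold_locales auto
  have "metric_dim (prism n k m) = card landmarks"
  proof (rule metric_dim_eqI)
    show "finite landmarks" by (simp add: landmarks_def)
    show "resolving_set (prism n k m) landmarks" by (rule landmarks_resolving_set)
    show "card landmarks \<le> card Q" if "finite Q" "resolving_set (prism n k m) Q" for Q
      using resolving_set_card_ge_4[OF that] card_landmarks by simp
  qed
  with card_landmarks show ?thesis by simp
qed

end
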